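(* Let $G=(\mathbb Z/2)^3$ and write $H^*(G,\mathbb F_2)=\mathbb F_2[x,y,z]$ with $x,y,z$ of degree one dual to the standard basis $e_1,e_2,e_3$ of $G$. Let $\alpha\in H^4(G,\mathbb Z)$ be the integral class whose mod $2$ reduction is $Sq^1(xyz)=x^2yz+xy^2z+xyz^2$. For $g=ae_1+be_2+ce_3\in G$ with $a,b,c\in\{0,1\}$ (written multiplicatively as $g=x^ay^bz^c$), the inverse transgression $\theta_g^*:H^4(G,\mathbb Z)\to H^3(G,\mathbb Z)$ satisfies, after mod $2$ reduction, $$\theta_g^*(\alpha)=a(y^2z+yz^2)+b(x^2z+xz^2)+c(x^2y+xy^2).$$ In particular $\theta_g^*(\alpha)\neq 0$ for every $g\neq 1$.
   Context: For an elementary abelian $2$-group $G$ and $k>0$, mod $2$ reduction $H^k(G,\mathbb Z)\to H^k(G,\mathbb F_2)$ is injective, and integral classes are identified with their reductions. For a finite group $G$ and $g\in G$ with centralizer $Z_G(g)$ (here $Z_G(g)=G$), the inverse transgression $\theta_g$ is the cochain map from inhomogeneous cochains $C^{k+1}(G,\mathbb Z)$ to $C^k(Z_G(g),\mathbb Z)$ given by $\theta_g(\phi)(u_1,\dots,u_k)=(-1)^k\phi(g,u_1,\dots,u_k)+\sum_{i=1}^k(-1)^{i+k}\phi(u_1,\dots,u_i,g_i,u_{i+1},\dots,u_k)$, where $g_i=(u_1\cdots u_i)^{-1}g\,u_1\cdots u_i$; $\theta_g^*$ is the induced map in cohomology. Equivalently, if $\rho_g:Z_G(g)\times\mathbb Z\to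 G$, $(u,t^i)\mapsto ug^i$, and $\nu$ generates $H^1(\mathbb Z,\mathbb Z)$, then $\rho_g^*(w)=\mathrm{res}^G_{Z_G(g)}(w)\otimes1+\theta_g^*(w)\otimes\nu$. *)

theory Defs
  imports "HOL-Number_Theory.Cong"
begin

text \<open>The group G = (Z/2)^3, an element (a,b,c) standing for a e1 + b e2 + c e3
  (equivalently x^a y^b z^c).  The group law is componentwise addition mod 2.\<close>

type_synonym grp = "bool \<times> bool \<times> bool"

definition gmul :: "grp \<Rightarrow> grp \<Rightarrow> grp" where
  "gmul g h = (case g of (a,b,c) \<Rightarrow> case h of (a',b',c') \<Rightarrow> (a \<noteq> a', b \<noteq> b', c \<noteq> c'))"

definition gone :: grp where "gone = (False, False, False)"

definition ginv :: "grp \<Rightarrow> grp" where "ginv g = g"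

definition gprod :: "grp list \<Rightarrow> grp" where "gprod xs = foldl gmul gone xs"

text \<open>Inhomogeneous integral cochains: functions on lists of group elements;
  a k-cochain is only evaluated on lists of length k.\<close>

type_synonym cochain = "grp list \<Rightarrow> int"

definition merge_at :: "nat \<Rightarrow> grp list \<Rightarrow> grp list" where
  "merge_at i gs = take (i - 1) gs @ [gmul (gs ! (i - 1)) (gs ! i)] @ drop (i + 1) gs"

definition cobdry :: "nat \<Rightarrow> cochain \<Rightarrow> cochain" where
  "cobdry k \<phi> gs = \<phi> (tl gs) + (\<Sum>i\<in>{1..k}. (-1)^i * \<phi> (merge_at i gs))
                    + (-1)^(k+1) * \<phi> (take k gs)"

definition cocycle :: "nat \<Rightarrow> cochain \<Rightarrow> bool" where
  "cocycle k \<phi> \<longleftrightarrow> (\<forall>gs. length gs = Suc k \<longrightarrow> cobdry k \<phi> gs = 0)"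

definition is_coboundary :: "nat \<Rightarrow> cochain \<Rightarrow> bool" where
  "is_coboundary m \<phi> \<longleftrightarrow> (\<exists>\<psi>. \<forall>gs. length gs = Suc m \<longrightarrow> \<phi> gs = cobdry m \<psi> gs)"

text \<open>Two (Suc m)-cochains have cohomologous mod 2 reductions
  (same class in H^(m+1)(G,F2)); F2-cochains are represented by integer lifts.\<close>
definition cohom_mod2 :: "nat \<Rightarrow> cochain \<Rightarrow> cochain \<Rightarrow> bool" where
  "cohom_mod2 m \<phi> \<psi> \<longleftrightarrow>
     (\<exists>\<chi>. \<forall>gs. length gs = Suc m \<longrightarrow> [\<phi> gs - \<psi> gs = cobdry m \<chi> gs] (mod 2))"

definition theta :: "grp \<Rightarrow> nat \<Rightarrow> cochain \<Rightarrow> cochain" where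
  "theta g k \<phi> us = (-1)^k * \<phi> (g # us)
     + (\<Sum>i\<in>{1..k}. (-1)^(i+k) *
          \<phi> (take i us @ [gmul (gmul (ginv (gprod (take i us))) g) (gprod (take i us))] @ drop i us))"

definition xc :: "grp \<Rightarrow> int" where "xc g = of_bool (fst g)"
definition yc :: "grp \<Rightarrow> int" where "yc g = of_bool (fst (snd g))"
definition zc :: "grp \<Rightarrow> int" where "zc g = of_bool (snd (snd g))"

text \<open>Cocycle representing Sq^1(xyz) = x^2yz + xy^2z + xyz^2 (cup products of
  inhomogeneous cochains: (f \<union> h)(g1..g_{p+q}) = f(g1..gp) h(g_{p+1}..g_{p+q})).\<close>
definition sq1xyz :: cochain where
  "sq1xyz gs = xc (gs!0) * xc (gs!1) * yc (gs!2) * zc (gs!3)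
             + xc (gs!0) * yc (gs!1) * yc (gs!2) * zc (gs!3)
             + xc (gs!0) * yc (gs!1) * zc (gs!2) * zc (gs!3)"

definition target :: "bool \<Rightarrow> bool \<Rightarrow> bool \<Rightarrow> cochain" where
  "target a b c gs =
       of_bool a * (yc (gs!0) * yc (gs!1) * zc (gs!2) + yc (gs!0) * zc (gs!1) * zc (gs!2))
     + of_bool b * (xc (gs!0) * xc (gs!1) * zc (gs!2) + xc (gs!0) * zc (gs!1) * zc (gs!2))
     + of_bool c * (xc (gs!0) * xc (gs!1) * yc (gs!2) + xc (gs!0) * yc (gs!1) * yc (gs!2))"

end

theory Submission
  imports Defs
begin

text \<open>Since G is abelian, theta_g is the slant product with g, which commutes with the
  coboundary and hence acts on integral and on mod 2 cohomology. An integral lift of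
  Sq^1(xyz) is the integral Bockstein of xyz. Slanting its mod 2 reduction with
  g = x^a y^b z^c gives the stated cocycle up to even terms. For g \<noteq> 1 that cocycle is not
  a mod 2 coboundary, as it takes an odd value on a suitable mod 2 cycle of the bar complex;
  therefore theta_g(alpha) is not even an integral coboundary.\<close>

lemma gmul_comm: "gmul g h = gmul h g"
  by (cases g; cases h) (auto simp: gmul_def)

lemma gmul_assoc: "gmul (gmul g h) k = gmul g (gmul h k)"
  by (cases g; cases h; cases k) (auto simp: gmul_def)

lemma gmul_left_commute: "gmul g (gmul h k) = gmul h (gmul g k)"
  by (metis gmul_assoc gmul_comm)

lemma gmul_self: "gmul g g = gone"
  by (cases g) (auto simp: gmul_def gone_def)

lemma gmul_gone_left: "gmul gone g = g"
  by (cases g) (auto simp: gmul_def gone_def)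

lemma gmul_gone_right: "gmul g gone = g"
  by (cases g) (auto simp: gmul_def gone_def)

lemma gmul_conj: "gmul (gmul (ginv p) g) p = g"
  by (cases g; cases p) (auto simp: gmul_def ginv_def)

lemma xc_gmul: "xc (gmul g h) = xc g + xc h - 2 * xc g * xc h"
  by (cases g; cases h) (auto simp: gmul_def xc_def)

lemma yc_gmul: "yc (gmul g h) = yc g + yc h - 2 * yc g * yc h"
  by (cases g; cases h) (auto simp: gmul_def yc_def)

lemma zc_gmul: "zc (gmul g h) = zc g + zc h - 2 * zc g * zc h"
  by (cases g; cases h) (auto simp: gmul_def zc_def)

lemma coordinates_triple:
  "xc (a, b, c) = of_bool a" "yc (a, b, c) = of_bool b" "zc (a, b, c) = of_bool c"
  by (simp_all add: xc_def yc_def zc_def)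

lemma length_3_cases:
  assumes "length us = 3"
  obtains u1 u2 u3 where "us = [u1, u2, u3]"
  using assms by (auto simp: length_Suc_conv numeral_eq_Suc)

lemma length_5_cases:
  assumes "length us = 5"
  obtains u1 u2 u3 u4 u5 where "us = [u1, u2, u3, u4, u5]"
  using assms by (auto simp: length_Suc_conv numeral_eq_Suc)

lemma cobdry_add: "cobdry k (\<lambda>t. f t + h t) gs = cobdry k f gs + cobdry k h gs"
  by (simp add: cobdry_def sum.distrib algebra_simps)

lemma cobdry_zero: "cobdry k (\<lambda>_. 0) gs = 0"
  by (simp add: cobdry_def)

lemma theta_abelian: "theta g k \<phi> us = (-1)^k * \<phi> (g # us)
     + (\<Sum>i\<in>{1..k}. (-1)^(i+k) * \<phi> (take i us @ [g] @ drop i us))"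
  unfolding theta_def gmul_conj ..

lemma theta_diff: "theta g k (\<lambda>t. f t - h t) us = theta g k f us - theta g k h us"
  by (simp add: theta_abelian sum_subtractf algebra_simps)

lemma theta_even:
  assumes "\<And>gs. length gs = Suc k \<Longrightarrow> even (f gs)" and "length us = k"
  shows "even (theta g k f us)"
  unfolding theta_abelian using assms by (auto intro!: dvd_sum)

lemma cohom_mod2_sym:
  assumes "cohom_mod2 m \<phi> \<psi>"
  shows "cohom_mod2 m \<psi> \<phi>"
proof -
  obtain \<chi> where "\<And>gs. length gs = Suc m \<Longrightarrow> even (\<phi> gs - \<psi> gs - cobdry m \<chi> gs)"
    using assms unfolding cohom_mod2_def cong_iff_dvd_diff by blast
  then have "even (\<psi> gs - \<phi> gs - cobdry m \<chi> gs)" if "length gs = Suc m" for gs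
    using that by (simp add: add.commute)
  then show ?thesis
    unfolding cohom_mod2_def cong_iff_dvd_diff by blast
qed

lemma cohom_mod2_trans:
  assumes "cohom_mod2 m \<phi> \<psi>" and "cohom_mod2 m \<psi> \<rho>"
  shows "cohom_mod2 m \<phi> \<rho>"
proof -
  obtain \<chi>1 where \<chi>1: "\<And>gs. length gs = Suc m \<Longrightarrow> [\<phi> gs - \<psi> gs = cobdry m \<chi>1 gs] (mod 2)"
    using assms(1) unfolding cohom_mod2_def by blast
  obtain \<chi>2 where \<chi>2: "\<And>gs. length gs = Suc m \<Longrightarrow> [\<psi> gs - \<rho> gs = cobdry m \<chi>2 gs] (mod 2)"
    using assms(2) unfolding cohom_mod2_def by blast
  have "[\<phi> gs - \<rho> gs = cobdry m (\<lambda>t. \<chi>1 t + \<chi>2 t) gs] (mod 2)" if "length gs = Suc m" for gs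
    using cong_add[OF \<chi>1[OF that] \<chi>2[OF that]] by (simp add: cobdry_add)
  then show ?thesis
    unfolding cohom_mod2_def by blast
qed

lemma cohom_mod2_if_even_diff:
  assumes "\<And>gs. length gs = Suc m \<Longrightarrow> even (\<phi> gs - \<psi> gs)"
  shows "cohom_mod2 m \<phi> \<psi>"
  unfolding cohom_mod2_def
  using assms by (intro exI[of _ "\<lambda>_. 0"]) (simp add: cobdry_zero cong_iff_dvd_diff)

lemma is_coboundary_imp_cohom_mod2_zero: "is_coboundary m \<phi> \<Longrightarrow> cohom_mod2 m \<phi> (\<lambda>_. 0)"
  unfolding is_coboundary_def cohom_mod2_def by (metis cong_refl diff_zero)

lemma theta_cobdry:
  assumes "length us = 3"
  shows "theta g 3 (cobdry 3 \<chi>) us = cobdry 2 (theta g 2 \<chi>) us"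
proof -
  obtain u1 u2 u3 where "us = [u1, u2, u3]"
    using assms by (rule length_3_cases)
  then show ?thesis
    unfolding theta_abelian cobdry_def
    by (simp add: numeral_eq_Suc merge_at_def gmul_assoc gmul_comm gmul_left_commute)
qed

lemma cohom_mod2_theta:
  assumes "cohom_mod2 3 \<phi> \<psi>"
  shows "cohom_mod2 2 (theta g 3 \<phi>) (theta g 3 \<psi>)"
proof -
  obtain \<chi> where \<chi>: "\<And>gs. length gs = Suc 3 \<Longrightarrow> [\<phi> gs - \<psi> gs = cobdry 3 \<chi> gs] (mod 2)"
    using assms unfolding cohom_mod2_def by blast
  have "even (theta g 3 (\<lambda>t. \<phi> t - \<psi> t - cobdry 3 \<chi> t) us)" if "length us = 3" for us
    using \<chi> that by (intro theta_even) (auto simp: cong_iff_dvd_diff)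
  then have "[theta g 3 \<phi> us - theta g 3 \<psi> us = cobdry 2 (theta g 2 \<chi>) us] (mod 2)"
    if "length us = Suc 2" for us
    using that by (simp add: theta_diff theta_cobdry cong_iff_dvd_diff)
  then show ?thesis
    unfolding cohom_mod2_def by blast
qed

text \<open>Half the coboundary of the 0/1-valued cochain xyz, since \<delta>x = 2 x \<union> x for the
  0/1 lift x: the integral Bockstein of xyz.\<close>
definition bockstein_xyz :: cochain where
  "bockstein_xyz gs = xc (gs!0) * xc (gs!1) * yc (gs!2) * zc (gs!3)
                    - xc (gs!0) * yc (gs!1) * yc (gs!2) * zc (gs!3)
                    + xc (gs!0) * yc (gs!1) * zc (gs!2) * zc (gs!3)"

lemma cocycle_bockstein_xyz: "cocycle 4 bockstein_xyz"
  unfolding cocycle_def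
proof (intro allI impI)
  fix gs :: "grp list"
  assume "length gs = Suc 4"
  then obtain g1 g2 g3 g4 g5 where gs: "gs = [g1, g2, g3, g4, g5]"
    by (auto elim: length_5_cases)
  show "cobdry 4 bockstein_xyz gs = 0"
    unfolding gs cobdry_def merge_at_def bockstein_xyz_def
    by (simp add: numeral_eq_Suc xc_gmul yc_gmul zc_gmul) algebra
qed

lemma cohom_mod2_bockstein_xyz: "cohom_mod2 3 bockstein_xyz sq1xyz"
  by (rule cohom_mod2_if_even_diff) (simp add: bockstein_xyz_def sq1xyz_def algebra_simps)

lemma cohom_mod2_theta_sq1xyz: "cohom_mod2 2 (theta (a, b, c) 3 sq1xyz) (target a b c)"
proof (rule cohom_mod2_if_even_diff)
  fix us :: "grp list"
  assume "length us = Suc 2"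
  then obtain u1 u2 u3 where "us = [u1, u2, u3]"
    by (auto elim: length_3_cases)
  then show "even (theta (a, b, c) 3 sq1xyz us - target a b c us)"
    by (simp add: theta_abelian numeral_eq_Suc sq1xyz_def target_def coordinates_triple
        algebra_simps)
qed

text \<open>Pairing with the bar chain [h1|h1|h2] + [h1|h2|h1] + [h2|h1|h1] + [1|1|h2] + [h2|1|1],
  a mod 2 cycle.\<close>
definition cycle_eval :: "cochain \<Rightarrow> grp \<Rightarrow> grp \<Rightarrow> int" where
  "cycle_eval f h1 h2 =
     f [h1, h1, h2] + f [h1, h2, h1] + f [h2, h1, h1] + f [gone, gone, h2] + f [h2, gone, gone]"

lemma cycle_eval_cobdry:
  "cycle_eval (cobdry 2 \<psi>) h1 h2 = 2 * (\<psi> [h1, gmul h1 h2] - \<psi> [gmul h1 h2, h1])"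
  unfolding cycle_eval_def cobdry_def merge_at_def
  by (simp add: numeral_eq_Suc gmul_self gmul_gone_left gmul_gone_right gmul_comm[of h2 h1])

lemma cycle_eval_even_if_cohom_mod2_zero:
  assumes "cohom_mod2 2 f (\<lambda>_. 0)"
  shows "even (cycle_eval f h1 h2)"
proof -
  obtain \<chi> where \<chi>: "\<And>gs. length gs = Suc 2 \<Longrightarrow> even (f gs - cobdry 2 \<chi> gs)"
    using assms unfolding cohom_mod2_def by (auto simp: cong_iff_dvd_diff)
  have "even (cycle_eval (\<lambda>t. f t - cobdry 2 \<chi> t) h1 h2)"
    using \<chi> by (simp add: cycle_eval_def)
  moreover have "cycle_eval (\<lambda>t. f t - cobdry 2 \<chi> t) h1 h2
      = cycle_eval f h1 h2 - cycle_eval (cobdry 2 \<chi>) h1 h2"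
    by (simp add: cycle_eval_def)
  ultimately show ?thesis
    by (simp add: cycle_eval_cobdry)
qed

lemma target_not_cohom_mod2_zero:
  assumes "(a, b, c) \<noteq> gone"
  shows "\<not> cohom_mod2 2 (target a b c) (\<lambda>_. 0)"
proof -
  define h1 where "h1 = (if a \<or> b then (False, False, True) else (False, True, False))"
  define h2 where "h2 = (if a then (False, True, False) else (True, False, False))"
  have "odd (cycle_eval (target a b c) h1 h2)"
    using assms unfolding h1_def h2_def
    by (cases a; cases b; cases c)
      (simp_all add: cycle_eval_def target_def coordinates_triple gone_def)
  then show ?thesis
    using cycle_eval_even_if_cohom_mod2_zero by blast
qed

theorem lemma5p2:
  fixes a b c :: bool
  shows "(\<exists>\<phi>. cocycle 4 \<phi> \<and> cohom_mod2 3 \<phi> sq1xyz) \<and>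
         (\<forall>\<phi>. cocycle 4 \<phi> \<and> cohom_mod2 3 \<phi> sq1xyz \<longrightarrow>
               cohom_mod2 2 (theta (a, b, c) 3 \<phi>) (target a b c)) \<and>
         (\<forall>\<phi>. cocycle 4 \<phi> \<and> cohom_mod2 3 \<phi> sq1xyz \<longrightarrow> (a, b, c) \<noteq> gone \<longrightarrow>
               \<not> is_coboundary 2 (theta (a, b, c) 3 \<phi>))"
proof -
  have theta_target: "cohom_mod2 2 (theta (a, b, c) 3 \<phi>) (target a b c)"
    if "cohom_mod2 3 \<phi> sq1xyz" for \<phi>
    using cohom_mod2_trans[OF cohom_mod2_theta[OF that] cohom_mod2_theta_sq1xyz] .
  have "\<not> is_coboundary 2 (theta (a, b, c) 3 \<phi>)"
    if "cohom_mod2 3 \<phi> sq1xyz" and "(a, b, c) \<noteq> gone" for \<phi>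
  proof
    assume "is_coboundary 2 (theta (a, b, c) 3 \<phi>)"
    then have "cohom_mod2 2 (target a b c) (\<lambda>_. 0)"
      using cohom_mod2_trans cohom_mod2_sym theta_target[OF that(1)]
        is_coboundary_imp_cohom_mod2_zero by blast
    then show False
      using target_not_cohom_mod2_zero[OF that(2)] by contradiction
  qed
  then show ?thesis
    using cocycle_bockstein_xyz cohom_mod2_bockstein_xyz theta_target by blast
qed

end
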